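(* Suppose $\mathcal M$ is unichain. For every policy $\pi\subseteq\mathcal S$ and state $s\in\mathcal S$, the function $\lambda\mapsto\alpha^\pi_s(\lambda)$ (activation advantage of $s$ under $\pi$ in $\mathcal M(\lambda)$) is affine, and the absolute value of its slope is at most $2D(P^\pi)+1$.
   Context: Setting. An MDP is $\mathcal M=(\mathcal S,\{0,1\},(P^a)_a,(r^a)_a)$, finite $\mathcal S$, row-stochastic $P^0,P^1$, rewards $r^0,r^1\in\mathbb R^{\mathcal S}$. A policy is a subset $\pi\subseteq\mathcal S$ of states where action 1 is played, inducing $P^\pi$, $r^\pi$; $\mathcal M$ is unichain if every $P^\pi$ has a single recurrent class. For $\lambda\in\mathbb R$, $\mathcal M(\lambda)$ has the same transitions and rewards $r^1-\lambda\mathbf 1$ (action 1), $r^0$ (action 0). For a unichain policy, bias $b^\pi(\lambda)$ (up to additive constant) solves $g^\pi\mathbf 1+b^\pi=r^\pi+P^\pi b^\pi$ in $\mathcal M(\lambda)$; activation advantage $\alpha^\pi_s(\lambda)=r^1_s-\lambda-r^0_s+(P^1_{s,\cdot}-P^0_{s,\cdot})\cdot b^\pi(\lambda)$. Diameter of unichain $P$ with recurrent class $\mathcal S_r$: $D(P)=\max_{s\in\mathcal S,s'\in\mathcal S_r}\mathbb E^P[\tau_{s,s'}]$, $\tau_{s,s'}$ the number of steps to reach $s'$ from $s$. *)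

theory Defs
  imports "HOL-Analysis.Analysis"
begin

definition stochastic :: "('s::finite \<Rightarrow> 's \<Rightarrow> real) \<Rightarrow> bool" where
  "stochastic P \<longleftrightarrow> (\<forall>s t. 0 \<le> P s t) \<and> (\<forall>s. (\<Sum>t\<in>UNIV. P s t) = 1)"

definition reach :: "('s \<Rightarrow> 's \<Rightarrow> real) \<Rightarrow> 's \<Rightarrow> 's \<Rightarrow> bool" where
  "reach P x y \<longleftrightarrow> (x, y) \<in> {(a, b). 0 < P a b}\<^sup>*"

text \<open>A state is recurrent iff every state reachable from it can reach it back
  (finite state space).\<close>
definition recurrent :: "('s \<Rightarrow> 's \<Rightarrow> real) \<Rightarrow> 's \<Rightarrow> bool" where
  "recurrent P x \<longleftrightarrow> (\<forall>y. reach P x y \<longrightarrow> reach P y x)"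

definition recurrent_classes :: "('s \<Rightarrow> 's \<Rightarrow> real) \<Rightarrow> 's set set" where
  "recurrent_classes P = {{y. reach P x y \<and> reach P y x} | x. recurrent P x}"

definition unichain_chain :: "('s \<Rightarrow> 's \<Rightarrow> real) \<Rightarrow> bool" where
  "unichain_chain P \<longleftrightarrow> card (recurrent_classes P) = 1"

text \<open>Transition matrix and reward of a policy pol (set of states where action 1 is played)
  in the MDP M(lambda).\<close>
definition pol_P :: "('s \<Rightarrow> 's \<Rightarrow> real) \<Rightarrow> ('s \<Rightarrow> 's \<Rightarrow> real) \<Rightarrow> 's set \<Rightarrow> 's \<Rightarrow> 's \<Rightarrow> real" where
  "pol_P P0 P1 pol s = (if s \<in> pol then P1 s else P0 s)"

definition pol_r :: "('s \<Rightarrow> real) \<Rightarrow> ('s \<Rightarrow> real) \<Rightarrow> 's set \<Rightarrow> real \<Rightarrow> 's \<Rightarrow> real" where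
  "pol_r r0 r1 pol lam s = (if s \<in> pol then r1 s - lam else r0 s)"

definition unichain_mdp :: "('s::finite \<Rightarrow> 's \<Rightarrow> real) \<Rightarrow> ('s \<Rightarrow> 's \<Rightarrow> real) \<Rightarrow> bool" where
  "unichain_mdp P0 P1 \<longleftrightarrow> (\<forall>pol. unichain_chain (pol_P P0 P1 pol))"

definition poisson_sol :: "('s::finite \<Rightarrow> 's \<Rightarrow> real) \<Rightarrow> ('s \<Rightarrow> real) \<Rightarrow> real \<Rightarrow> ('s \<Rightarrow> real) \<Rightarrow> bool" where
  "poisson_sol P r g b \<longleftrightarrow> (\<forall>s. g + b s = r s + (\<Sum>t\<in>UNIV. P s t * b t))"

text \<open>A bias of policy pol in M(lambda) (chosen solution; defined up to an additive constant).\<close>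
definition bias :: "('s::finite \<Rightarrow> 's \<Rightarrow> real) \<Rightarrow> ('s \<Rightarrow> 's \<Rightarrow> real) \<Rightarrow> ('s \<Rightarrow> real) \<Rightarrow> ('s \<Rightarrow> real)
    \<Rightarrow> 's set \<Rightarrow> real \<Rightarrow> 's \<Rightarrow> real" where
  "bias P0 P1 r0 r1 pol lam = (SOME b. \<exists>g. poisson_sol (pol_P P0 P1 pol) (pol_r r0 r1 pol lam) g b)"

definition adv :: "('s::finite \<Rightarrow> 's \<Rightarrow> real) \<Rightarrow> ('s \<Rightarrow> 's \<Rightarrow> real) \<Rightarrow> ('s \<Rightarrow> real) \<Rightarrow> ('s \<Rightarrow> real)
    \<Rightarrow> 's set \<Rightarrow> 's \<Rightarrow> real \<Rightarrow> real" where
  "adv P0 P1 r0 r1 pol s lam =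
     r1 s - lam - r0 s + (\<Sum>t\<in>UNIV. (P1 s t - P0 s t) * bias P0 P1 r0 r1 pol lam t)"

text \<open>avoid P s' n x = probability that the chain started at x has X_0,...,X_n all different
  from s', i.e. Pr(tau_{x,s'} > n) with tau = min {t >= 0. X_t = s'}.\<close>
fun avoid :: "('s::finite \<Rightarrow> 's \<Rightarrow> real) \<Rightarrow> 's \<Rightarrow> nat \<Rightarrow> 's \<Rightarrow> real" where
  "avoid P s' 0 x = (if x = s' then 0 else 1)"
| "avoid P s' (Suc n) x = (if x = s' then 0 else (\<Sum>y\<in>UNIV. P x y * avoid P s' n y))"

text \<open>Expected hitting time E[tau_{x,s'}] = sum_{n>=0} Pr(tau > n).\<close>
definition hit_time :: "('s::finite \<Rightarrow> 's \<Rightarrow> real) \<Rightarrow> 's \<Rightarrow> 's \<Rightarrow> real" where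
  "hit_time P x s' = (\<Sum>n. avoid P s' n x)"

definition diameter :: "('s::finite \<Rightarrow> 's \<Rightarrow> real) \<Rightarrow> real" where
  "diameter P = Max {hit_time P x s' | x s'. recurrent P s'}"

end

theory Submission
  imports Defs
begin

text \<open>
  Let h solve the Poisson equation of the policy chain P for the reward -1 on pol and 0
  elsewhere, the derivative in lam of the reward of M(lam). Solutions of the Poisson equation
  are unique up to an additive constant (maximum principle, using a state reachable from
  everywhere), so the bias in M(lam) is b0 + lam h plus a constant, and the constant is
  annihilated by the zero-sum row P1 s - P0 s. Hence the advantage is affine in lam with slope
  (P1 s - P0 s) h - 1, whose absolute value is at most the span of h plus one. The gain of h
  lies in [-1, 0], so for a recurrent s' the function h - h s' vanishes at s' and satisfies a
  hitting-time equation with forcing term bounded by 1; therefore |h x - h s'| is at most the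
  expected hitting time of s' from x, and the span of h is at most twice the diameter.
\<close>

lemma stochastic_nonneg: "stochastic P \<Longrightarrow> 0 \<le> P x y"
  unfolding stochastic_def by blast

lemma stochastic_row_sum: "stochastic P \<Longrightarrow> (\<Sum>y\<in>UNIV. P x y) = 1"
  unfolding stochastic_def by blast

lemma stochastic_pol_P:
  assumes "stochastic P0" and "stochastic P1"
  shows "stochastic (pol_P P0 P1 pol)"
  using assms unfolding stochastic_def pol_P_def by auto

lemma convex_sum_const:
  fixes q :: "'a \<Rightarrow> real"
  assumes "sum q UNIV = 1"
  shows "(\<Sum>t\<in>UNIV. q t * c) = c"
  using assms by (simp add: sum_distrib_right[symmetric])

lemma convex_sum_le:
  fixes q h :: "'a \<Rightarrow> real"
  assumes "\<And>t. 0 \<le> q t" and "sum q UNIV = 1" and "\<And>t. h t \<le> M"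
  shows "(\<Sum>t\<in>UNIV. q t * h t) \<le> M"
proof -
  have "(\<Sum>t\<in>UNIV. q t * h t) \<le> (\<Sum>t\<in>UNIV. q t * M)"
    using assms by (intro sum_mono mult_left_mono) auto
  then show ?thesis using convex_sum_const[OF assms(2)] by simp
qed

lemma convex_sum_ge:
  fixes q h :: "'a \<Rightarrow> real"
  assumes "\<And>t. 0 \<le> q t" and "sum q UNIV = 1" and "\<And>t. m \<le> h t"
  shows "m \<le> (\<Sum>t\<in>UNIV. q t * h t)"
proof -
  have "(\<Sum>t\<in>UNIV. q t * m) \<le> (\<Sum>t\<in>UNIV. q t * h t)"
    using assms by (intro sum_mono mult_left_mono) auto
  then show ?thesis using convex_sum_const[OF assms(2)] by simp
qed

lemma abs_convex_sum_diff_le: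
  fixes p q h :: "'a \<Rightarrow> real"
  assumes "\<And>t. 0 \<le> p t" and "sum p UNIV = 1" and "\<And>t. 0 \<le> q t" and "sum q UNIV = 1"
    and "\<And>t. m \<le> h t" and "\<And>t. h t \<le> M"
  shows "\<bar>\<Sum>t\<in>UNIV. (p t - q t) * h t\<bar> \<le> M - m"
proof -
  have "(\<Sum>t\<in>UNIV. (p t - q t) * h t) = (\<Sum>t\<in>UNIV. p t * h t) - (\<Sum>t\<in>UNIV. q t * h t)"
    by (simp add: left_diff_distrib sum_subtractf)
  moreover have "(\<Sum>t\<in>UNIV. p t * h t) \<le> M" and "m \<le> (\<Sum>t\<in>UNIV. p t * h t)"
    using assms by (intro convex_sum_le convex_sum_ge; simp)+
  moreover have "(\<Sum>t\<in>UNIV. q t * h t) \<le> M" and "m \<le> (\<Sum>t\<in>UNIV. q t * h t)"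
    using assms by (intro convex_sum_le convex_sum_ge; simp)+
  ultimately show ?thesis by linarith
qed

lemma ex_max_finite_UNIV:
  fixes d :: "'s::finite \<Rightarrow> 'a::linorder"
  obtains x where "\<And>z. d z \<le> d x"
proof -
  have "Max (range d) \<in> range d"
    by (rule Max_in) auto
  then obtain x where "d x = Max (range d)"
    by (metis imageE)
  moreover have "d z \<le> Max (range d)" for z
    by (rule Max_ge) auto
  ultimately have "d z \<le> d x" for z by simp
  then show ?thesis by (rule that)
qed

lemma ex_min_finite_UNIV:
  fixes d :: "'s::finite \<Rightarrow> 'a::linorder"
  obtains x where "\<And>z. d x \<le> d z"
proof -
  have "Min (range d) \<in> range d"
    by (rule Min_in) auto
  then obtain x where "d x = Min (range d)"
    by (metis imageE)
  moreover have "Min (range d) \<le> d z" for z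
    by (rule Min_le) auto
  ultimately have "d x \<le> d z" for z by simp
  then show ?thesis by (rule that)
qed

section \<open>Reachability and recurrence\<close>

lemma reach_refl [simp]: "reach P x x"
  unfolding reach_def by simp

lemma reach_trans: "reach P x y \<Longrightarrow> reach P y z \<Longrightarrow> reach P x z"
  unfolding reach_def by (rule rtrancl_trans)

text \<open>A reachable state from which the fewest states are reachable is recurrent.\<close>

lemma ex_reach_recurrent:
  fixes P :: "'s::finite \<Rightarrow> 's \<Rightarrow> real"
  obtains y where "reach P x y" and "recurrent P y"
proof -
  obtain y where y: "reach P x y"
    and ymin: "\<And>z. reach P x z \<Longrightarrow> card {t. reach P y t} \<le> card {t. reach P z t}"
    using ex_has_least_nat[of "reach P x" x "\<lambda>y. card {z. reach P y z}"] by auto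
  have "reach P z y" if yz: "reach P y z" for z
  proof -
    have sub: "{t. reach P z t} \<subseteq> {t. reach P y t}"
      using reach_trans[OF yz] by blast
    have "card {t. reach P z t} = card {t. reach P y t}"
      using card_mono[OF finite sub] ymin[OF reach_trans[OF y yz]] by (rule antisym)
    then have "{t. reach P z t} = {t. reach P y t}"
      using card_subset_eq[OF finite sub] by blast
    then have "y \<in> {t. reach P z t}" by simp
    then show ?thesis by simp
  qed
  then show ?thesis using that y unfolding recurrent_def by blast
qed

lemma unichain_reach_recurrent:
  fixes P :: "'s::finite \<Rightarrow> 's \<Rightarrow> real"
  assumes "unichain_chain P" and "recurrent P s'"
  shows "reach P x s'"
proof -
  obtain y where y: "reach P x y" "recurrent P y" using ex_reach_recurrent by blast
  obtain C where C: "recurrent_classes P = {C}"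
    using assms(1) unfolding unichain_chain_def by (metis card_1_singletonE)
  have "{t. reach P y t \<and> reach P t y} \<in> recurrent_classes P"
    using y(2) unfolding recurrent_classes_def by blast
  moreover have "{t. reach P s' t \<and> reach P t s'} \<in> recurrent_classes P"
    using assms(2) unfolding recurrent_classes_def by blast
  ultimately have "{t. reach P y t \<and> reach P t y} = {t. reach P s' t \<and> reach P t s'}"
    using C by simp
  then have "s' \<in> {t. reach P y t \<and> reach P t y}" by simp
  then have "reach P y s'" by simp
  then show ?thesis by (rule reach_trans[OF y(1)])
qed

lemma unichain_ex_universal_target:
  fixes P :: "'s::finite \<Rightarrow> 's \<Rightarrow> real"
  assumes "unichain_chain P"
  obtains s' where "recurrent P s'" and "\<forall>x. reach P x s'"
proof -
  obtain s' where "recurrent P s'" using ex_reach_recurrent by blast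
  with unichain_reach_recurrent[OF assms] show ?thesis using that by blast
qed

section \<open>The Poisson equation\<close>

lemma harmonic_max_reach:
  assumes st: "stochastic P" and harmonic: "\<And>x. d x = (\<Sum>y\<in>UNIV. P x y * d y)"
    and max: "\<And>z. d z \<le> d x" and "reach P x y"
  shows "d y = d x"
  using \<open>reach P x y\<close> unfolding reach_def
proof (induction rule: rtrancl_induct)
  case base
  then show ?case by simp
next
  case (step y z)
  show ?case
  proof (rule ccontr)
    assume "d z \<noteq> d x"
    with max have "d z < d x" by (simp add: order_less_le)
    have "(\<Sum>t\<in>UNIV. P y t * d t) < (\<Sum>t\<in>UNIV. P y t * d x)"
    proof (rule sum_strict_mono_ex1)
      show "\<forall>t\<in>UNIV. P y t * d t \<le> P y t * d x"
        using max stochastic_nonneg[OF st] by (simp add: mult_left_mono)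
      show "\<exists>t\<in>UNIV. P y t * d t < P y t * d x"
        using step \<open>d z < d x\<close> by (intro bexI[of _ z]) auto
    qed simp
    then show False
      using harmonic[of y] step.IH convex_sum_const[OF stochastic_row_sum[OF st]] by simp
  qed
qed

lemma harmonic_const:
  fixes P :: "'s::finite \<Rightarrow> 's \<Rightarrow> real"
  assumes st: "stochastic P" and reach: "\<forall>x. reach P x s'"
    and harmonic: "\<And>x. d x = (\<Sum>y\<in>UNIV. P x y * d y)"
  shows "d x = d s'"
proof -
  obtain x1 where x1: "\<And>z. d z \<le> d x1" using ex_max_finite_UNIV by blast
  obtain x2 where "\<And>z. d x2 \<le> d z" using ex_min_finite_UNIV by blast
  then have x2: "\<And>z. - d z \<le> - d x2" by simp
  have neg_harmonic: "- d x = (\<Sum>y\<in>UNIV. P x y * - d y)" for x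
    using harmonic[of x] by (simp add: sum_negf)
  have "- d s' = - d x2"
    using harmonic_max_reach[OF st neg_harmonic x2] reach by blast
  moreover have "d s' = d x1"
    using harmonic_max_reach[OF st harmonic x1] reach by blast
  ultimately show ?thesis using x1[of x] x2[of x] by linarith
qed

lemma poisson_sol_lincomb:
  assumes "poisson_sol P r g b" and "poisson_sol P r' g' b'"
  shows "poisson_sol P (\<lambda>x. r x + c * r' x) (g + c * g') (\<lambda>x. b x + c * b' x)"
  unfolding poisson_sol_def
proof
  fix x
  have "g + b x = r x + (\<Sum>y\<in>UNIV. P x y * b y)"
    using assms(1) unfolding poisson_sol_def by blast
  moreover have "c * g' + c * b' x = c * r' x + c * (\<Sum>y\<in>UNIV. P x y * b' y)"
    using assms(2) unfolding poisson_sol_def by (metis distrib_left)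
  moreover have "(\<Sum>y\<in>UNIV. P x y * (b y + c * b' y))
      = (\<Sum>y\<in>UNIV. P x y * b y) + c * (\<Sum>y\<in>UNIV. P x y * b' y)"
    by (simp add: distrib_left sum.distrib sum_distrib_left mult.left_commute)
  ultimately show "g + c * g' + (b x + c * b' x) = r x + c * r' x + (\<Sum>y\<in>UNIV. P x y * (b y + c * b' y))"
    by linarith
qed

lemma poisson_gain_bounds:
  fixes P :: "'s::finite \<Rightarrow> 's \<Rightarrow> real"
  assumes st: "stochastic P" and sol: "poisson_sol P r g b"
    and "\<And>x. m \<le> r x" and "\<And>x. r x \<le> M"
  shows "m \<le> g" and "g \<le> M"
proof -
  have eq: "g = r x + (\<Sum>y\<in>UNIV. P x y * b y) - b x" for x
    using sol[unfolded poisson_sol_def, rule_format, of x] by linarith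
  obtain x1 where x1: "\<And>z. b z \<le> b x1" using ex_max_finite_UNIV by blast
  have "(\<Sum>y\<in>UNIV. P x1 y * b y) \<le> b x1"
    using stochastic_nonneg[OF st] stochastic_row_sum[OF st] x1 by (rule convex_sum_le)
  then show "g \<le> M" using eq[of x1] assms(4)[of x1] by linarith
  obtain x2 where x2: "\<And>z. b x2 \<le> b z" using ex_min_finite_UNIV by blast
  have "b x2 \<le> (\<Sum>y\<in>UNIV. P x2 y * b y)"
    using stochastic_nonneg[OF st] stochastic_row_sum[OF st] x2 by (rule convex_sum_ge)
  then show "m \<le> g" using eq[of x2] assms(3)[of x2] by linarith
qed

lemma poisson_sol_unique:
  fixes P :: "'s::finite \<Rightarrow> 's \<Rightarrow> real"
  assumes st: "stochastic P" and reach: "\<forall>x. reach P x s'"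
    and sol1: "poisson_sol P r g1 b1" and sol2: "poisson_sol P r g2 b2"
  shows "g1 = g2" and "b1 x = b2 x + (b1 s' - b2 s')"
proof -
  have diff: "poisson_sol P (\<lambda>_. 0) (g1 - g2) (\<lambda>x. b1 x - b2 x)"
    using poisson_sol_lincomb[OF sol1 sol2, of "-1"] by simp
  then show "g1 = g2"
    using poisson_gain_bounds[OF st diff, of 0 0] by simp
  then have "b1 x - b2 x = (\<Sum>y\<in>UNIV. P x y * (b1 y - b2 y))" for x
    using diff[unfolded poisson_sol_def, rule_format, of x] by simp
  from harmonic_const[OF st reach this, of x] show "b1 x = b2 x + (b1 s' - b2 s')"
    by linarith
qed

text \<open>
  With the bias normalised by \<open>b s' = 0\<close>, the free coordinate \<open>v $ s'\<close> carries the gain; the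
  resulting linear map \<open>v \<mapsto> reward\<close> is injective by uniqueness, hence surjective.
\<close>

lemma poisson_sol_exists:
  fixes P :: "'s::finite \<Rightarrow> 's \<Rightarrow> real"
  assumes st: "stochastic P" and reach: "\<forall>x. reach P x s'"
  obtains g b where "poisson_sol P r g b"
proof -
  define bias_of where "bias_of v y = (if y = s' then 0 else v $ y)" for v :: "real^'s" and y
  define L where "L v = (\<chi> x. v $ s' + bias_of v x - (\<Sum>y\<in>UNIV. P x y * bias_of v y))"
    for v :: "real^'s"
  have sol: "poisson_sol P (\<lambda>x. L v $ x) (v $ s') (bias_of v)" for v
    unfolding poisson_sol_def L_def by simp
  have "bias_of (v + w) y = bias_of v y + bias_of w y" for v w y
    unfolding bias_of_def by simp
  moreover have "bias_of (c *\<^sub>R v) y = c * bias_of v y" for c v y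
    unfolding bias_of_def by simp
  ultimately have "linear L"
    by (intro linearI) (simp_all add: L_def vec_eq_iff distrib_left sum.distrib sum_distrib_left algebra_simps)
  moreover have "inj L"
  proof (rule injI)
    fix v w
    assume "L v = L w"
    then have sol_w: "poisson_sol P (\<lambda>x. L v $ x) (w $ s') (bias_of w)"
      using sol[of w] by simp
    have "v $ x = w $ x" for x
    proof (cases "x = s'")
      case True
      then show ?thesis using poisson_sol_unique(1)[OF st reach sol[of v] sol_w] by simp
    next
      case False
      then show ?thesis
        using poisson_sol_unique(2)[OF st reach sol[of v] sol_w, of x] by (simp add: bias_of_def)
    qed
    then show "v = w" by (simp add: vec_eq_iff)
  qed
  ultimately have "surj L" by (rule linear_inj_imp_surj)
  then obtain v where "L v = (\<chi> x. r x)" by (metis surjD)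
  then have "poisson_sol P r (v $ s') (bias_of v)"
    using sol[of v] by simp
  then show ?thesis by (rule that)
qed

section \<open>Hitting times\<close>

lemma avoid_target [simp]: "avoid P s' n s' = 0"
  by (cases n) auto

lemma avoid_nonneg: "stochastic P \<Longrightarrow> 0 \<le> avoid P s' n x"
  by (induction n arbitrary: x) (auto intro!: sum_nonneg simp: stochastic_nonneg)

lemma avoid_le_1: "stochastic P \<Longrightarrow> avoid P s' n x \<le> 1"
  by (induction n arbitrary: x)
    (auto intro!: convex_sum_le simp: stochastic_nonneg stochastic_row_sum)

lemma avoid_Suc_le: "stochastic P \<Longrightarrow> avoid P s' (Suc n) x \<le> avoid P s' n x"
proof (induction n arbitrary: x)
  case 0
  then show ?case using avoid_le_1[OF 0, of s' "Suc 0" x] by (cases "x = s'") auto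
next
  case (Suc n)
  have "(\<Sum>y\<in>UNIV. P x y * avoid P s' (Suc n) y) \<le> (\<Sum>y\<in>UNIV. P x y * avoid P s' n y)"
    using Suc by (intro sum_mono mult_left_mono) (auto simp: stochastic_nonneg)
  then show ?case by simp
qed

lemma avoid_antimono: "stochastic P \<Longrightarrow> n \<le> m \<Longrightarrow> avoid P s' m x \<le> avoid P s' n x"
  using lift_Suc_antimono_le[of "\<lambda>n. avoid P s' n x"] avoid_Suc_le by blast

lemma reach_imp_avoid_lt_1:
  assumes st: "stochastic P" and "reach P x s'"
  obtains n where "avoid P s' n x < 1"
proof -
  have "\<exists>n. avoid P s' n x < 1"
    using \<open>reach P x s'\<close> unfolding reach_def
  proof (induction rule: converse_rtrancl_induct)
    case base
    then show ?case by (intro exI[of _ 0]) simp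
  next
    case (step x y)
    then obtain n where n: "avoid P s' n y < 1" by auto
    show ?case
    proof (cases "x = s'")
      case True
      then show ?thesis by (intro exI[of _ 0]) simp
    next
      case False
      have "(\<Sum>z\<in>UNIV. P x z * avoid P s' n z) < (\<Sum>z\<in>UNIV. P x z * 1)"
      proof (rule sum_strict_mono_ex1)
        show "\<forall>z\<in>UNIV. P x z * avoid P s' n z \<le> P x z * 1"
          by (simp add: avoid_le_1[OF st] mult_left_le stochastic_nonneg[OF st])
        show "\<exists>z\<in>UNIV. P x z * avoid P s' n z < P x z * 1"
          using n step by (intro bexI[of _ y]) auto
      qed simp
      then show ?thesis using False stochastic_row_sum[OF st] by (intro exI[of _ "Suc n"]) simp
    qed
  qed
  then show ?thesis using that by blast
qed

lemma avoid_add_le: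
  assumes st: "stochastic P" and "\<And>y. avoid P s' m y \<le> c"
  shows "avoid P s' (n + m) x \<le> c * avoid P s' n x"
proof (induction n arbitrary: x)
  case 0
  then show ?case using assms(2)[of x] by (cases "x = s'") auto
next
  case (Suc n)
  have "(\<Sum>y\<in>UNIV. P x y * avoid P s' (n + m) y) \<le> (\<Sum>y\<in>UNIV. P x y * (c * avoid P s' n y))"
    using Suc by (intro sum_mono mult_left_mono) (auto simp: stochastic_nonneg[OF st])
  then show ?case by (simp add: sum_distrib_left mult.left_commute)
qed

lemma avoid_uniformly_lt_1:
  fixes P :: "'s::finite \<Rightarrow> 's \<Rightarrow> real"
  assumes st: "stochastic P" and reach: "\<forall>x. reach P x s'"
  obtains K \<rho> where "0 < K" and "0 < \<rho>" and "\<rho> < 1" and "\<And>y. avoid P s' K y \<le> \<rho>"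
proof -
  have "\<exists>n. avoid P s' n x < 1" for x
    using reach_imp_avoid_lt_1[OF st, of x s'] reach by blast
  then obtain n where n: "\<And>x. avoid P s' (n x) x < 1" by metis
  define K where "K = Suc (Max (range n))"
  have K: "avoid P s' K y < 1" for y
    using avoid_antimono[OF st, of "n y" K s' y] n[of y] by (simp add: K_def le_SucI)
  define \<rho> where "\<rho> = max (1/2) (Max (range (\<lambda>y. avoid P s' K y)))"
  have "Max (range (\<lambda>y. avoid P s' K y)) \<in> range (\<lambda>y. avoid P s' K y)"
    by (intro Max_in) auto
  then have "\<rho> < 1" using K unfolding \<rho>_def by auto
  moreover have "avoid P s' K y \<le> \<rho>" for y
    unfolding \<rho>_def by (intro max.coboundedI2 Max_ge) auto
  ultimately show ?thesis using that[of K \<rho>] by (simp add: K_def \<rho>_def)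
qed

lemma avoid_geometric_decay:
  fixes P :: "'s::finite \<Rightarrow> 's \<Rightarrow> real"
  assumes st: "stochastic P" and reach: "\<forall>x. reach P x s'"
  obtains \<theta> C where "0 < \<theta>" and "\<theta> < 1" and "\<And>n y. avoid P s' n y \<le> C * \<theta> ^ n"
proof -
  obtain K \<rho> where K: "0 < K" and \<rho>: "0 < \<rho>" "\<rho> < 1" and avoid_K: "\<And>y. avoid P s' K y \<le> \<rho>"
    using avoid_uniformly_lt_1[OF st reach] by blast
  define \<theta> where "\<theta> = root K \<rho>"
  have \<theta>: "0 < \<theta>" "\<theta> < 1" "\<theta> ^ K = \<rho>"
    unfolding \<theta>_def using K \<rho> by (simp_all add: real_root_lt_1_iff)
  have "avoid P s' n y \<le> \<theta> ^ n / \<rho>" for n y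
  proof (induction n arbitrary: y rule: less_induct)
    case (less n)
    show ?case
    proof (cases "n < K")
      case True
      then have "\<rho> \<le> \<theta> ^ n" using power_decreasing[of n K \<theta>] \<theta> by simp
      then have "1 \<le> \<theta> ^ n / \<rho>" using \<rho> by simp
      then show ?thesis using avoid_le_1[OF st, of s' n y] by linarith
    next
      case False
      then have n: "n = (n - K) + K" by simp
      have "avoid P s' n y \<le> \<rho> * avoid P s' (n - K) y"
        using avoid_add_le[OF st avoid_K, of "n - K" y] n by simp
      also have "\<dots> \<le> \<rho> * (\<theta> ^ (n - K) / \<rho>)"
        using less.IH[of "n - K" y] K False \<rho> by (intro mult_left_mono) auto
      also have "\<dots> = \<theta> ^ n / \<rho>"
        using \<rho> \<theta>(3) by (subst n, subst power_add) simp
      finally show ?thesis .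
    qed
  qed
  then show ?thesis using that[of \<theta> "1 / \<rho>"] \<theta> by simp
qed

lemma summable_avoid:
  fixes P :: "'s::finite \<Rightarrow> 's \<Rightarrow> real"
  assumes st: "stochastic P" and reach: "\<forall>x. reach P x s'"
  shows "summable (\<lambda>n. avoid P s' n x)"
proof -
  obtain \<theta> C where \<theta>: "0 < \<theta>" "\<theta> < 1" and bound: "\<And>n y. avoid P s' n y \<le> C * \<theta> ^ n"
    using avoid_geometric_decay[OF st reach] by blast
  show ?thesis
  proof (rule summable_comparison_test)
    show "\<exists>N. \<forall>n\<ge>N. norm (avoid P s' n x) \<le> C * \<theta> ^ n"
      using bound avoid_nonneg[OF st] by auto
    show "summable (\<lambda>n. C * \<theta> ^ n)"
      using \<theta> by (intro summable_mult summable_geometric) simp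
  qed
qed

lemma abs_le_avoid_partial_sum:
  assumes st: "stochastic P" and "w s' = 0"
    and w_eq: "\<And>x. x \<noteq> s' \<Longrightarrow> w x = f x + (\<Sum>y\<in>UNIV. P x y * w y)"
    and f: "\<And>x. \<bar>f x\<bar> \<le> 1" and M: "\<And>x. \<bar>w x\<bar> \<le> M"
  shows "\<bar>w x\<bar> \<le> (\<Sum>k<n. avoid P s' k x) + M * avoid P s' n x"
proof (induction n arbitrary: x)
  case 0
  then show ?case using M \<open>w s' = 0\<close> by (cases "x = s'") auto
next
  case (Suc n)
  show ?case
  proof (cases "x = s'")
    case True
    then show ?thesis using \<open>w s' = 0\<close> by simp
  next
    case False
    have "\<bar>w x\<bar> \<le> 1 + (\<Sum>y\<in>UNIV. P x y * \<bar>w y\<bar>)"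
      using w_eq[OF False] f[of x] sum_abs[of "\<lambda>y. P x y * w y" UNIV]
      by (simp add: abs_mult stochastic_nonneg[OF st])
    also have "\<dots> \<le> 1 + (\<Sum>y\<in>UNIV. P x y * ((\<Sum>k<n. avoid P s' k y) + M * avoid P s' n y))"
      using Suc.IH by (intro add_left_mono sum_mono mult_left_mono) (auto simp: stochastic_nonneg[OF st])
    also have "\<dots> = 1 + (\<Sum>k<n. \<Sum>y\<in>UNIV. P x y * avoid P s' k y) + M * (\<Sum>y\<in>UNIV. P x y * avoid P s' n y)"
      by (simp add: distrib_left sum.distrib sum_distrib_left mult.left_commute sum.swap[of _ UNIV])
    also have "\<dots> = (\<Sum>k<Suc n. avoid P s' k x) + M * avoid P s' (Suc n) x"
      using False by (simp add: sum.lessThan_Suc_shift del: sum.lessThan_Suc)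
    finally show ?thesis .
  qed
qed

lemma abs_le_hit_time:
  fixes P :: "'s::finite \<Rightarrow> 's \<Rightarrow> real"
  assumes st: "stochastic P" and reach: "\<forall>x. reach P x s'" and "w s' = 0"
    and "\<And>x. x \<noteq> s' \<Longrightarrow> w x = f x + (\<Sum>y\<in>UNIV. P x y * w y)" and "\<And>x. \<bar>f x\<bar> \<le> 1"
  shows "\<bar>w x\<bar> \<le> hit_time P x s'"
proof -
  define M where "M = Max (range (\<lambda>x. \<bar>w x\<bar>))"
  have "\<bar>w y\<bar> \<le> M" for y unfolding M_def by (intro Max_ge) auto
  note partial = abs_le_avoid_partial_sum[OF st assms(3-5) this]
  have "(\<lambda>n. (\<Sum>k<n. avoid P s' k x) + M * avoid P s' n x) \<longlonglongrightarrow> hit_time P x s' + M * 0"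
    unfolding hit_time_def using summable_avoid[OF st reach]
    by (intro tendsto_add tendsto_mult summable_LIMSEQ summable_LIMSEQ_zero tendsto_const)
  then show ?thesis using LIMSEQ_le_const partial by fastforce
qed

lemma hit_time_le_diameter:
  fixes P :: "'s::finite \<Rightarrow> 's \<Rightarrow> real"
  assumes "recurrent P s'"
  shows "hit_time P x s' \<le> diameter P"
proof -
  have "finite {hit_time P x s' | x s'. recurrent P s'}"
    by (rule finite_subset[of _ "(\<lambda>(x, y). hit_time P x y) ` UNIV"]) auto
  then show ?thesis unfolding diameter_def using assms by (intro Max_ge) auto
qed

lemma poisson_bias_span_le_diameter:
  fixes P :: "'s::finite \<Rightarrow> 's \<Rightarrow> real"
  assumes st: "stochastic P" and "unichain_chain P" and sol: "poisson_sol P r g h"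
    and "\<And>x. m \<le> r x" and "\<And>x. r x \<le> m + 1"
  shows "h x - h y \<le> 2 * diameter P"
proof -
  obtain s' where rec: "recurrent P s'" and reach: "\<forall>x. reach P x s'"
    using unichain_ex_universal_target[OF \<open>unichain_chain P\<close>] by blast
  have g: "m \<le> g" "g \<le> m + 1" using poisson_gain_bounds[OF st sol] assms(4,5) by auto
  define w where "w x = h x - h s'" for x
  have w_eq: "w x = (r x - g) + (\<Sum>y\<in>UNIV. P x y * w y)" for x
  proof -
    have "(\<Sum>y\<in>UNIV. P x y * w y) = (\<Sum>y\<in>UNIV. P x y * h y) - h s'"
      using convex_sum_const[OF stochastic_row_sum[OF st]]
      by (simp add: w_def right_diff_distrib sum_subtractf)
    then show ?thesis using sol[unfolded poisson_sol_def, rule_format, of x] w_def[of x] by linarith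
  qed
  have forcing: "\<bar>r x - g\<bar> \<le> 1" for x using g assms(4,5)[of x] by simp
  have "\<bar>w z\<bar> \<le> hit_time P z s'" for z
    by (rule abs_le_hit_time[OF st reach]) (simp add: w_def, rule w_eq, rule forcing)
  then have "\<bar>w z\<bar> \<le> diameter P" for z
    using hit_time_le_diameter[OF rec, of z] by (rule order_trans)
  from this[of x] this[of y] show ?thesis unfolding w_def by linarith
qed

section \<open>Bias and activation advantage\<close>

lemma bias_poisson_sol:
  assumes "poisson_sol (pol_P P0 P1 pol) (pol_r r0 r1 pol lam) g b"
  shows "\<exists>g. poisson_sol (pol_P P0 P1 pol) (pol_r r0 r1 pol lam) g (bias P0 P1 r0 r1 pol lam)"
proof -
  have "\<exists>b g. poisson_sol (pol_P P0 P1 pol) (pol_r r0 r1 pol lam) g b"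
    using assms by blast
  then show ?thesis unfolding bias_def by (rule someI_ex)
qed

lemma bias_affine:
  assumes st: "stochastic (pol_P P0 P1 pol)" and reach: "\<forall>x. reach (pol_P P0 P1 pol) x s'"
    and sol0: "poisson_sol (pol_P P0 P1 pol) (pol_r r0 r1 pol 0) g0 b0"
    and sol1: "poisson_sol (pol_P P0 P1 pol) (\<lambda>x. - indicator pol x) g1 h"
  shows "\<exists>k. \<forall>x. bias P0 P1 r0 r1 pol lam x = b0 x + lam * h x + k"
proof -
  have "pol_r r0 r1 pol lam = (\<lambda>x. pol_r r0 r1 pol 0 x + lam * - indicator pol x)"
    by (simp add: fun_eq_iff pol_r_def)
  then have "poisson_sol (pol_P P0 P1 pol) (pol_r r0 r1 pol lam) (g0 + lam * g1) (\<lambda>x. b0 x + lam * h x)"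
    using poisson_sol_lincomb[OF sol0 sol1, of lam] by simp
  moreover from bias_poisson_sol[OF this] obtain g
    where "poisson_sol (pol_P P0 P1 pol) (pol_r r0 r1 pol lam) g (bias P0 P1 r0 r1 pol lam)"
    by blast
  ultimately have "bias P0 P1 r0 r1 pol lam x = b0 x + lam * h x
      + (bias P0 P1 r0 r1 pol lam s' - (b0 s' + lam * h s'))" for x
    using poisson_sol_unique(2)[OF st reach] by blast
  then show ?thesis by blast
qed

lemma adv_eq_affine:
  assumes "stochastic P0" and "stochastic P1"
    and bias: "\<exists>k. \<forall>x. bias P0 P1 r0 r1 pol lam x = b0 x + lam * h x + k"
  shows "adv P0 P1 r0 r1 pol s lam = r1 s - r0 s + (\<Sum>t\<in>UNIV. (P1 s t - P0 s t) * b0 t)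
           + ((\<Sum>t\<in>UNIV. (P1 s t - P0 s t) * h t) - 1) * lam"
proof -
  obtain k where k: "\<And>x. bias P0 P1 r0 r1 pol lam x = b0 x + lam * h x + k" using bias by blast
  define d where "d t = P1 s t - P0 s t" for t
  have "(\<Sum>t\<in>UNIV. d t * bias P0 P1 r0 r1 pol lam t)
      = (\<Sum>t\<in>UNIV. d t * b0 t + lam * (d t * h t) + k * d t)"
    by (simp add: k algebra_simps)
  also have "\<dots> = (\<Sum>t\<in>UNIV. d t * b0 t) + lam * (\<Sum>t\<in>UNIV. d t * h t) + k * (\<Sum>t\<in>UNIV. d t)"
    by (simp add: sum.distrib sum_distrib_left)
  also have "(\<Sum>t\<in>UNIV. d t) = 0"
    using assms(1,2) by (simp add: d_def sum_subtractf stochastic_row_sum)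
  finally show ?thesis unfolding adv_def d_def[symmetric] by (simp add: algebra_simps)
qed

theorem mainTheorem8:
  fixes P0 P1 :: "'s::finite \<Rightarrow> 's \<Rightarrow> real" and r0 r1 :: "'s \<Rightarrow> real"
    and pol :: "'s set" and s :: 's
  assumes "stochastic P0" and "stochastic P1"
    and "unichain_mdp P0 P1"
  shows "\<exists>a c. (\<forall>lam. adv P0 P1 r0 r1 pol s lam = a + c * lam)
              \<and> \<bar>c\<bar> \<le> 2 * diameter (pol_P P0 P1 pol) + 1"
proof -
  let ?P = "pol_P P0 P1 pol"
  have st: "stochastic ?P" using stochastic_pol_P[OF assms(1,2)] .
  have uc: "unichain_chain ?P" using assms(3) unfolding unichain_mdp_def by blast
  obtain s' where reach: "\<forall>x. reach ?P x s'"
    using unichain_ex_universal_target[OF uc] by blast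
  obtain g0 b0 where sol0: "poisson_sol ?P (pol_r r0 r1 pol 0) g0 b0"
    using poisson_sol_exists[OF st reach] by blast
  obtain g1 h where sol1: "poisson_sol ?P (\<lambda>x. - indicator pol x) g1 h"
    using poisson_sol_exists[OF st reach] by blast
  define D where "D = (\<Sum>t\<in>UNIV. (P1 s t - P0 s t) * h t)"
  have "adv P0 P1 r0 r1 pol s lam = r1 s - r0 s + (\<Sum>t\<in>UNIV. (P1 s t - P0 s t) * b0 t) + (D - 1) * lam"
    for lam unfolding D_def by (rule adv_eq_affine[OF assms(1,2) bias_affine[OF st reach sol0 sol1]])
  moreover have "\<bar>D\<bar> \<le> 2 * diameter ?P"
  proof -
    obtain xM xm where "\<And>z. h z \<le> h xM" and "\<And>z. h xm \<le> h z"
      using ex_max_finite_UNIV ex_min_finite_UNIV by metis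
    then have "\<bar>D\<bar> \<le> h xM - h xm"
      unfolding D_def using assms(1,2)
      by (intro abs_convex_sum_diff_le) (simp_all add: stochastic_nonneg stochastic_row_sum)
    also have "\<dots> \<le> 2 * diameter ?P"
      by (rule poisson_bias_span_le_diameter[OF st uc sol1, of "-1"]) (simp_all add: indicator_def)
    finally show ?thesis .
  qed
  ultimately show ?thesis by (intro exI[of _ "D - 1"] exI) auto
qed

end
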